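(* Let $p\in]1,+\infty[$. Consider the implicit scheme $\frac{\mathbf u^k-\mathbf u^{k-1}}{\tau_{k-1}}=-\Delta_p^{\mathbf K}\mathbf u^k+\mathbf f^k$, $k\in[N]$, $\mathbf u^0=\mathbf g$, with kernel $\mathbf K$, data $(\mathbf f^k)_k,\mathbf g$ and step sizes $\tau_{k-1}>0$. Assume $I_n\mathbf K$ is nonnegative, measurable, symmetric with $\sup_x\int_\Omega I_n\mathbf K(x,y)dy<\infty$; that $I_n\mathbf g\in L^{\max(p,q)}(\Omega)$ for some $q\in[1,+\infty]$ with $\sup_n\|I_n\mathbf g\|_{L^q(\Omega)}<+\infty$; and that $\bar f_n\in L^1([0,T];L^{\max(p,q)}(\Omega))$ with $\sup_n\|\bar f_n\|_{L^1([0,T];L^q(\Omega))}<+\infty$. Then $\bar u_n(\cdot,t)\in L^{\max(p,q)}(\Omega)$ for all $t\in[0,T]$ and $\sup_{t\in[0,T],n\in\mathbb N}\|\bar u_n(\cdot,t)\|_{L^q(\Omega)}<+\infty$.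
   Context: $d\ge1$, $\Omega=[0,1]^d$, hypercubic cells $\Omega^n_{\mathbf i}$ of measures $h_{\mathbf i}$, $I_n$ the piecewise-constant injector on cells (resp. products of cells). $\Psi(s)=|s|^{p-2}s$; $(\Delta_p^{\mathbf K}\mathbf u)_{\mathbf i}=-\sum_{\mathbf j}h_{\mathbf j}\mathbf K_{\mathbf i\mathbf j}\Psi(\mathbf u_{\mathbf j}-\mathbf u_{\mathbf i})$. Time partition $0=t_0<\dots<t_N=T$, $\tau_{k-1}=t_k-t_{k-1}$. With $u_n^k=I_n\mathbf u^k$, $f_n^k=I_n\mathbf f^k$: $\bar u_n(x,t)=u_n^k(x)$ and $\bar f_n(x,t)=f_n^k(x)$ for $t\in]t_{k-1},t_k]$. *)

theory Defs
  imports "HOL-Analysis.Analysis" "HOL-Probability.Essential_Supremum"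
begin

definition Omega :: "(real^'d) set" where
  "Omega = cbox 0 One"

definition Psi :: "real \<Rightarrow> real \<Rightarrow> real" where
  "Psi p s = \<bar>s\<bar> powr (p - 2) * s"

text \<open>A hypercubic cell (open/closed/half-open faces allowed).\<close>
definition hypercubic :: "(real^'d) set \<Rightarrow> bool" where
  "hypercubic C \<longleftrightarrow> (\<exists>a r. r > 0 \<and> box a (a + r *\<^sub>R One) \<subseteq> C \<and> C \<subseteq> cbox a (a + r *\<^sub>R One))"

definition cell_partition :: "(nat \<Rightarrow> 'c set) \<Rightarrow> (nat \<Rightarrow> 'c \<Rightarrow> (real^'d) set) \<Rightarrow> bool" where
  "cell_partition J cell \<longleftrightarrow> (\<forall>n. finite (J n) \<and> (\<forall>i\<in>J n. hypercubic (cell n i))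
      \<and> (\<forall>i\<in>J n. \<forall>j\<in>J n. i \<noteq> j \<longrightarrow> cell n i \<inter> cell n j = {})
      \<and> (\<Union>i\<in>J n. cell n i) = Omega)"

definition hmeas :: "(nat \<Rightarrow> 'c \<Rightarrow> (real^'d) set) \<Rightarrow> nat \<Rightarrow> 'c \<Rightarrow> real" where
  "hmeas cell n i = measure lebesgue (cell n i)"

definition In :: "(nat \<Rightarrow> 'c set) \<Rightarrow> (nat \<Rightarrow> 'c \<Rightarrow> (real^'d) set) \<Rightarrow> nat \<Rightarrow> ('c \<Rightarrow> real) \<Rightarrow> real^'d \<Rightarrow> real" where
  "In J cell n v x = (\<Sum>i\<in>J n. v i * indicator (cell n i) x)"

definition In2 :: "(nat \<Rightarrow> 'c set) \<Rightarrow> (nat \<Rightarrow> 'c \<Rightarrow> (real^'d) set) \<Rightarrow> nat \<Rightarrow> ('c \<Rightarrow> 'c \<Rightarrow> real) \<Rightarrow> real^'d \<Rightarrow> real^'d \<Rightarrow> real" where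
  "In2 J cell n K x y = (\<Sum>i\<in>J n. \<Sum>j\<in>J n. K i j * indicator (cell n i) x * indicator (cell n j) y)"

definition Lp_mem :: "ereal \<Rightarrow> (real^'d \<Rightarrow> real) \<Rightarrow> bool" where
  "Lp_mem r f \<longleftrightarrow> f \<in> borel_measurable (lebesgue_on Omega) \<and>
     (if r = \<infinity> then esssup (lebesgue_on Omega) (\<lambda>x. ereal \<bar>f x\<bar>) < \<infinity>
      else integrable (lebesgue_on Omega) (\<lambda>x. \<bar>f x\<bar> powr real_of_ereal r))"

definition Lp_norm :: "ereal \<Rightarrow> (real^'d \<Rightarrow> real) \<Rightarrow> real" where
  "Lp_norm r f = (if r = \<infinity> then real_of_ereal (esssup (lebesgue_on Omega) (\<lambda>x. ereal \<bar>f x\<bar>))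
      else (\<integral>x. \<bar>f x\<bar> powr real_of_ereal r \<partial>lebesgue_on Omega) powr (1 / real_of_ereal r))"

definition L1Lp_mem :: "real \<Rightarrow> ereal \<Rightarrow> (real^'d \<Rightarrow> real \<Rightarrow> real) \<Rightarrow> bool" where
  "L1Lp_mem T r F \<longleftrightarrow> (\<lambda>z. F (fst z) (snd z)) \<in> borel_measurable borel \<and>
     (\<forall>t\<in>{0..T}. Lp_mem r (\<lambda>x. F x t)) \<and>
     integrable (lebesgue_on {0..T}) (\<lambda>t. Lp_norm r (\<lambda>x. F x t))"

definition L1Lp_norm :: "real \<Rightarrow> ereal \<Rightarrow> (real^'d \<Rightarrow> real \<Rightarrow> real) \<Rightarrow> real" where
  "L1Lp_norm T r F = (\<integral>t. Lp_norm r (\<lambda>x. F x t) \<partial>lebesgue_on {0..T})"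

text \<open>Time interpolant: value w k on ]t_{k-1}, t_k], and w 0 at t \<le> t_0 = 0.\<close>
definition time_interp :: "(nat \<Rightarrow> real) \<Rightarrow> (nat \<Rightarrow> 'a) \<Rightarrow> real \<Rightarrow> 'a" where
  "time_interp tt w t = w (LEAST k. t \<le> tt k)"

end

theory Submission
  imports Defs
begin

(* At every level n and time step the scheme is the finite system v + tau (Delta_p^K v) = u^(k-1) + tau f^k
   on the cells.  Testing it with h_i |v_i|^(q-2) v_i, the p-Laplacian term is nonnegative after
   symmetrising in i and j (K is nonnegative and symmetric, Psi is odd, s |-> |s|^(q-2) s is nondecreasing),
   and Hoelder's inequality gives |v|_q <= |u^(k-1)|_q + tau |f^k|_q for the cell-weighted discrete norms;
   for q = infinity the same bound comes from the discrete maximum principle.  Summing over the steps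
   bounds |u^k|_q by |g|_q + sum_k tau_k |f^k|_q.  Since the injected functions are step functions on cells
   of positive measure, these discrete norms are exactly the L^q(Omega) norms of the interpolants, the sum
   is the L^1(0,T;L^q(Omega)) norm of the interpolant of f, and membership in every L^r(Omega) is automatic. *)

lemma integral_indicator_sum:
  fixes c :: "'i \<Rightarrow> real"
  assumes "finite I" and "\<And>k. k \<in> I \<Longrightarrow> A k \<in> sets M"
    and "\<And>k. k \<in> I \<Longrightarrow> emeasure M (A k) < \<infinity>"
  shows "integrable M (\<lambda>x. \<Sum>k\<in>I. c k * indicator (A k) x)"
    and "(\<integral>x. (\<Sum>k\<in>I. c k * indicator (A k) x) \<partial>M) = (\<Sum>k\<in>I. c k * measure M (A k))"
proof -
  have int: "integrable M (\<lambda>x. c k * indicator (A k) x)" if "k \<in> I" for k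
    using assms that by simp
  then show "integrable M (\<lambda>x. \<Sum>k\<in>I. c k * indicator (A k) x)" by (rule Bochner_Integration.integrable_sum)
  have "(\<integral>x. (\<Sum>k\<in>I. c k * indicator (A k) x) \<partial>M) = (\<Sum>k\<in>I. \<integral>x. c k * indicator (A k) x \<partial>M)"
    using int by (rule Bochner_Integration.integral_sum)
  also have "\<dots> = (\<Sum>k\<in>I. c k * measure M (A k))"
    using assms(2) sets.sets_into_space by (intro sum.cong) (simp_all add: Int_absorb2)
  finally show "(\<integral>x. (\<Sum>k\<in>I. c k * indicator (A k) x) \<partial>M) = (\<Sum>k\<in>I. c k * measure M (A k))" .
qed

lemma esssup_ge_on_pos_measure:
  assumes "A \<in> sets M" and "emeasure M A \<noteq> 0" and "\<And>x. x \<in> A \<Longrightarrow> c \<le> f x"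
  shows "c \<le> esssup M f"
proof (rule ccontr)
  assume less: "\<not> c \<le> esssup M f"
  then have [measurable]: "f \<in> borel_measurable M"
    using esssup_non_measurable by fastforce
  have "A \<subseteq> {x \<in> space M. f x > esssup M f}"
    using less assms(1,3) sets.sets_into_space by fastforce
  then have "emeasure M A \<le> emeasure M {x \<in> space M. f x > esssup M f}"
    by (rule emeasure_mono) measurable
  then show False using esssup_zero_measure[of M f] assms(2) by simp
qed

lemma hypercubic_lmeasurable_pos:
  assumes "hypercubic (C :: (real^'d) set)"
  shows "C \<in> lmeasurable" "0 < measure lebesgue C"
proof -
  obtain a r where r: "r > 0" and inner: "box a (a + r *\<^sub>R One) \<subseteq> C"
    and outer: "C \<subseteq> cbox a (a + r *\<^sub>R One)"
    using assms unfolding hypercubic_def by blast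
  let ?B = "box a (a + r *\<^sub>R One)"
  have "negligible (C - ?B)"
    using outer by (blast intro: negligible_subset[OF negligible_frontier_interval])
  then have "?B \<union> (C - ?B) \<in> sets lebesgue"
    by (intro sets.Un[OF _ negligible_imp_sets]) auto
  moreover have "C = ?B \<union> (C - ?B)" using inner by blast
  ultimately show C: "C \<in> lmeasurable"
    using outer by (metis fmeasurableI2 lmeasurable_cbox)
  have "0 < (\<Prod>b\<in>(Basis::(real^'d) set). r)"
    using r by (simp add: prod_pos)
  also have "\<dots> = measure lebesgue ?B"
    using r by (simp add: measure_completion measure_lborel_box inner_add_left inner_diff_left)
  also have "\<dots> \<le> measure lebesgue C"
    using inner C by (intro measure_mono_fmeasurable) auto
  finally show "0 < measure lebesgue C" .
qed

lemma Psi_nonneg: "0 \<le> s \<Longrightarrow> 0 \<le> Psi p s"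
  unfolding Psi_def by simp

lemma Psi_nonpos: "s \<le> 0 \<Longrightarrow> Psi p s \<le> 0"
  unfolding Psi_def by (simp add: mult_nonneg_nonpos)

lemma Psi_minus: "Psi p (- s) = - Psi p s"
  unfolding Psi_def by simp

lemma mono_diff_mult_Psi_nonneg:
  assumes "mono \<phi>"
  shows "0 \<le> (\<phi> y - \<phi> x) * Psi p (y - x)"
proof (cases "x \<le> y")
  case True
  then show ?thesis using monoD[OF assms True] Psi_nonneg[of "y - x" p] by simp
next
  case False
  then have "\<phi> y \<le> \<phi> x" using monoD[OF assms, of y x] by simp
  then show ?thesis using Psi_nonpos[of "y - x" p] False by (simp add: mult_nonpos_nonpos)
qed

text \<open>With the cell measures as weights h, this is the operator Delta_p^K of the scheme.\<close>

definition p_Laplacian ::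
    "'c set \<Rightarrow> ('c \<Rightarrow> real) \<Rightarrow> ('c \<Rightarrow> 'c \<Rightarrow> real) \<Rightarrow> real \<Rightarrow> ('c \<Rightarrow> real) \<Rightarrow> 'c \<Rightarrow> real" where
  "p_Laplacian I h Kk p v i = - (\<Sum>j\<in>I. h j * Kk i j * Psi p (v j - v i))"

lemma p_Laplacian_accretive:
  assumes "\<And>i. i \<in> I \<Longrightarrow> 0 \<le> h i"
    and "\<And>i j. i \<in> I \<Longrightarrow> j \<in> I \<Longrightarrow> 0 \<le> Kk i j"
    and "\<And>i j. i \<in> I \<Longrightarrow> j \<in> I \<Longrightarrow> Kk i j = Kk j i"
    and "mono \<phi>"
  shows "0 \<le> (\<Sum>i\<in>I. h i * \<phi> (v i) * p_Laplacian I h Kk p v i)"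
proof -
  define w where "w i j = h i * h j * Kk i j" for i j
  define T where "T i j = w i j * \<phi> (v i) * Psi p (v j - v i)" for i j
  define S where "S = (\<Sum>i\<in>I. h i * \<phi> (v i) * p_Laplacian I h Kk p v i)"
  have S_T: "S = - (\<Sum>i\<in>I. \<Sum>j\<in>I. T i j)"
    unfolding S_def T_def w_def p_Laplacian_def
    by (simp add: sum_distrib_left sum_negf mult.assoc mult.left_commute)
  have T_swap: "T j i = - (w i j * \<phi> (v j) * Psi p (v j - v i))" if "i \<in> I" "j \<in> I" for i j
    using assms(3)[OF that] Psi_minus[of p "v j - v i"] by (simp add: T_def w_def mult.commute)
  have "(\<Sum>i\<in>I. \<Sum>j\<in>I. T i j) = (\<Sum>i\<in>I. \<Sum>j\<in>I. T j i)"
    by (rule sum.swap)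
  also have "\<dots> = - (\<Sum>i\<in>I. \<Sum>j\<in>I. w i j * \<phi> (v j) * Psi p (v j - v i))"
    using T_swap by (simp add: sum_negf)
  finally have "2 * S = (\<Sum>i\<in>I. \<Sum>j\<in>I. w i j * \<phi> (v j) * Psi p (v j - v i) - T i j)"
    using S_T by (simp add: sum_subtractf)
  also have "\<dots> = (\<Sum>i\<in>I. \<Sum>j\<in>I. w i j * ((\<phi> (v j) - \<phi> (v i)) * Psi p (v j - v i)))"
    by (simp add: T_def left_diff_distrib right_diff_distrib mult.assoc)
  also have "\<dots> \<ge> 0"
    using assms(1,2,4) unfolding w_def
    by (intro sum_nonneg mult_nonneg_nonneg mono_diff_mult_Psi_nonneg) auto
  finally show ?thesis unfolding S_def by simp
qed

lemma p_Laplacian_nonneg_at_max: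
  assumes "\<And>j. j \<in> I \<Longrightarrow> 0 \<le> h j" and "\<And>j. j \<in> I \<Longrightarrow> 0 \<le> Kk i j"
    and "\<And>j. j \<in> I \<Longrightarrow> v j \<le> v i"
  shows "0 \<le> p_Laplacian I h Kk p v i"
  unfolding p_Laplacian_def neg_0_le_iff_le using assms
  by (intro sum_nonpos mult_nonneg_nonpos mult_nonneg_nonneg Psi_nonpos) auto

lemma p_Laplacian_nonpos_at_min:
  assumes "\<And>j. j \<in> I \<Longrightarrow> 0 \<le> h j" and "\<And>j. j \<in> I \<Longrightarrow> 0 \<le> Kk i j"
    and "\<And>j. j \<in> I \<Longrightarrow> v i \<le> v j"
  shows "p_Laplacian I h Kk p v i \<le> 0"
  unfolding p_Laplacian_def neg_le_0_iff_le using assms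
  by (intro sum_nonneg mult_nonneg_nonneg Psi_nonneg) auto

definition signed_powr :: "real \<Rightarrow> real \<Rightarrow> real" where
  "signed_powr r s = sgn s * \<bar>s\<bar> powr (r - 1)"

lemma signed_powr_mult_self: "signed_powr r s * s = \<bar>s\<bar> powr r"
proof -
  have "signed_powr r s * s = \<bar>s\<bar> * \<bar>s\<bar> powr (r - 1)"
    unfolding signed_powr_def by (simp add: abs_sgn mult_ac)
  then show ?thesis by (simp add: powr_mult_base)
qed

lemma abs_signed_powr: "\<bar>signed_powr r s\<bar> = \<bar>s\<bar> powr (r - 1)"
  unfolding signed_powr_def by (cases "s = 0") (simp_all add: abs_mult abs_sgn_eq)

lemma mono_signed_powr:
  assumes "1 \<le> r"
  shows "mono (signed_powr r)"
proof (rule monoI)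
  fix x y :: real
  assume "x \<le> y"
  consider "x = 0" | "0 < x" | "x < 0" "0 \<le> y" | "y < 0" by linarith
  then show "signed_powr r x \<le> signed_powr r y"
  proof cases
    case 1
    then show ?thesis using \<open>x \<le> y\<close> by (cases "y = 0") (simp_all add: signed_powr_def)
  next
    case 2
    then show ?thesis using \<open>x \<le> y\<close> assms by (simp add: signed_powr_def powr_mono2)
  next
    case 3
    then have "signed_powr r x \<le> 0" "0 \<le> signed_powr r y"
      by (simp_all add: signed_powr_def)
    then show ?thesis by linarith
  next
    case 4
    then show ?thesis using \<open>x \<le> y\<close> assms by (simp add: signed_powr_def powr_mono2)
  qed
qed

lemma sum_powr_Holder_nondegenerate:
  fixes h x y :: "'i \<Rightarrow> real"
  assumes h: "\<And>i. i \<in> I \<Longrightarrow> 0 \<le> h i"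
    and x: "\<And>i. i \<in> I \<Longrightarrow> 0 \<le> x i" and y: "\<And>i. i \<in> I \<Longrightarrow> 0 \<le> y i" and "1 < r"
    and X: "X = (\<Sum>i\<in>I. h i * x i powr r)" "0 < X"
    and Y: "Y = (\<Sum>i\<in>I. h i * y i powr r)" "0 < Y"
  shows "(\<Sum>i\<in>I. h i * x i powr (r - 1) * y i) \<le> X powr ((r - 1) / r) * Y powr (1 / r)"
proof -
  define \<alpha> where "\<alpha> = X powr ((r - 1) / r)"
  define \<beta> where "\<beta> = Y powr (1 / r)"
  have "0 < \<alpha>" "0 < \<beta>" unfolding \<alpha>_def \<beta>_def using X Y by auto
  \<comment> \<open>Young's inequality with the conjugate exponents r/(r-1) and r, after normalising both sides\<close>
  have young: "x i powr (r - 1) / \<alpha> * (y i / \<beta>)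
      \<le> (r - 1) / r * (x i powr r / X) + 1 / r * (y i powr r / Y)" if i: "i \<in> I" for i
  proof -
    have "x i powr (r - 1) / \<alpha> * (y i / \<beta>)
        \<le> (x i powr (r - 1) / \<alpha>) powr (r / (r - 1)) / (r / (r - 1)) + (y i / \<beta>) powr r / r"
      using \<open>1 < r\<close> x[OF i] y[OF i] \<open>0 < \<alpha>\<close> \<open>0 < \<beta>\<close>
      by (intro Youngs_inequality) (auto simp: field_simps)
    also have "(x i powr (r - 1) / \<alpha>) powr (r / (r - 1)) = x i powr r / X"
      using \<open>1 < r\<close> X x[OF i] unfolding \<alpha>_def by (simp add: powr_divide powr_powr)
    also have "(y i / \<beta>) powr r = y i powr r / Y"
      using \<open>1 < r\<close> Y y[OF i] unfolding \<beta>_def by (simp add: powr_divide powr_powr)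
    finally show ?thesis by (simp add: mult_ac)
  qed
  have "(\<Sum>i\<in>I. h i * x i powr (r - 1) * y i) / (\<alpha> * \<beta>)
      = (\<Sum>i\<in>I. h i * (x i powr (r - 1) / \<alpha> * (y i / \<beta>)))"
    by (simp add: sum_divide_distrib mult.assoc)
  also have "\<dots> \<le> (\<Sum>i\<in>I. h i * ((r - 1) / r * (x i powr r / X) + 1 / r * (y i powr r / Y)))"
    using young h by (intro sum_mono mult_left_mono) auto
  also have "\<dots> = (r - 1) / r * ((\<Sum>i\<in>I. h i * x i powr r) / X) + 1 / r * ((\<Sum>i\<in>I. h i * y i powr r) / Y)"
    by (simp add: sum.distrib sum_distrib_left sum_divide_distrib algebra_simps)
  also have "\<dots> = 1" using \<open>1 < r\<close> X Y by (simp add: field_simps)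
  finally show ?thesis
    using \<open>0 < \<alpha>\<close> \<open>0 < \<beta>\<close> unfolding \<alpha>_def \<beta>_def by (simp add: divide_le_eq)
qed

lemma sum_powr_Holder:
  fixes h x y :: "'i \<Rightarrow> real"
  assumes "finite I" and h: "\<And>i. i \<in> I \<Longrightarrow> 0 \<le> h i"
    and x: "\<And>i. i \<in> I \<Longrightarrow> 0 \<le> x i" and y: "\<And>i. i \<in> I \<Longrightarrow> 0 \<le> y i" and "1 \<le> r"
  shows "(\<Sum>i\<in>I. h i * x i powr (r - 1) * y i)
    \<le> (\<Sum>i\<in>I. h i * x i powr r) powr ((r - 1) / r) * (\<Sum>i\<in>I. h i * y i powr r) powr (1 / r)"
proof -
  define X where "X = (\<Sum>i\<in>I. h i * x i powr r)"
  define Y where "Y = (\<Sum>i\<in>I. h i * y i powr r)"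
  have "0 \<le> X" unfolding X_def by (intro sum_nonneg mult_nonneg_nonneg h) auto
  moreover have "0 \<le> Y" unfolding Y_def by (intro sum_nonneg mult_nonneg_nonneg h) auto
  ultimately consider "X = 0 \<or> Y = 0" | "0 < X" "0 < Y" "r = 1" | "0 < X" "0 < Y" "1 < r"
    using \<open>1 \<le> r\<close> by fastforce
  then have "(\<Sum>i\<in>I. h i * x i powr (r - 1) * y i) \<le> X powr ((r - 1) / r) * Y powr (1 / r)"
  proof cases
    case 1
    have "(\<Sum>i\<in>I. h i * x i powr (r - 1) * y i) = 0"
    proof (rule sum.neutral, rule ballI)
      fix i assume "i \<in> I"
      then have "h i = 0 \<or> x i = 0 \<or> y i = 0"
        using 1 h \<open>finite I\<close> unfolding X_def Y_def by (auto simp: sum_nonneg_eq_0_iff)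
      then show "h i * x i powr (r - 1) * y i = 0" by auto
    qed
    then show ?thesis by simp
  next
    case 2
    \<comment> \<open>x i powr 0 is 0 or 1, as 0 powr 0 = 0\<close>
    have "h i * x i powr (r - 1) * y i \<le> h i * y i" if "i \<in> I" for i
      using 2 h[OF that] y[OF that] by (simp add: mult_left_le_one_le)
    then have "(\<Sum>i\<in>I. h i * x i powr (r - 1) * y i) \<le> (\<Sum>i\<in>I. h i * y i)"
      by (rule sum_mono)
    also have "\<dots> = Y" unfolding Y_def using 2 y by (intro sum.cong) auto
    finally show ?thesis using 2 by simp
  next
    case 3
    then show ?thesis
      using sum_powr_Holder_nondegenerate[of I h x y r X Y] h x y X_def Y_def by blast
  qed
  then show ?thesis unfolding X_def Y_def .
qed

lemma sum_abs_powr_implicit_step: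
  assumes h: "\<And>i. i \<in> I \<Longrightarrow> 0 \<le> h i"
    and Kk: "\<And>i j. i \<in> I \<Longrightarrow> j \<in> I \<Longrightarrow> 0 \<le> Kk i j"
    and sym: "\<And>i j. i \<in> I \<Longrightarrow> j \<in> I \<Longrightarrow> Kk i j = Kk j i"
    and "1 \<le> r" and "0 \<le> \<tau>"
    and step: "\<And>i. i \<in> I \<Longrightarrow> v i + \<tau> * p_Laplacian I h Kk p v i = w i"
  shows "(\<Sum>i\<in>I. h i * \<bar>v i\<bar> powr r) \<le> (\<Sum>i\<in>I. h i * \<bar>v i\<bar> powr (r - 1) * \<bar>w i\<bar>)"
proof -
  have "(\<Sum>i\<in>I. h i * \<bar>v i\<bar> powr r) = (\<Sum>i\<in>I. h i * signed_powr r (v i) * (w i - \<tau> * p_Laplacian I h Kk p v i))"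
    using step by (intro sum.cong) (simp_all flip: signed_powr_mult_self add: eq_diff_eq mult.assoc)
  also have "\<dots> = (\<Sum>i\<in>I. h i * signed_powr r (v i) * w i)
      - \<tau> * (\<Sum>i\<in>I. h i * signed_powr r (v i) * p_Laplacian I h Kk p v i)"
    by (simp add: right_diff_distrib sum_subtractf sum_distrib_left mult_ac)
  also have "\<dots> \<le> (\<Sum>i\<in>I. h i * signed_powr r (v i) * w i)"
  proof -
    have "0 \<le> (\<Sum>i\<in>I. h i * signed_powr r (v i) * p_Laplacian I h Kk p v i)"
      using p_Laplacian_accretive[where I=I and h=h and Kk=Kk and p=p and v=v,
          OF h Kk sym mono_signed_powr[OF \<open>1 \<le> r\<close>]] .
    then show ?thesis using \<open>0 \<le> \<tau>\<close> by simp
  qed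
  also have "\<dots> \<le> (\<Sum>i\<in>I. h i * \<bar>v i\<bar> powr (r - 1) * \<bar>w i\<bar>)"
  proof (rule sum_mono)
    fix i assume "i \<in> I"
    have "signed_powr r (v i) * w i \<le> \<bar>v i\<bar> powr (r - 1) * \<bar>w i\<bar>"
      by (metis abs_ge_self abs_mult abs_signed_powr)
    then show "h i * signed_powr r (v i) * w i \<le> h i * \<bar>v i\<bar> powr (r - 1) * \<bar>w i\<bar>"
      using h[OF \<open>i \<in> I\<close>] by (simp add: mult.assoc mult_left_mono)
  qed
  finally show ?thesis .
qed

lemma powr_one_div_le_of_le_powr_mult:
  fixes P C r :: real
  assumes "0 \<le> P" and "0 \<le> C" and "0 < r" and "P \<le> P powr ((r - 1) / r) * C"
  shows "P powr (1 / r) \<le> C"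
proof (cases "P = 0")
  case False
  have "P powr (1 / r) * P powr ((r - 1) / r) = P"
    using False \<open>0 \<le> P\<close> \<open>0 < r\<close> by (simp flip: powr_add add: add_divide_distrib[symmetric])
  with assms(4) have "P powr (1 / r) * P powr ((r - 1) / r) \<le> C * P powr ((r - 1) / r)"
    by (metis mult.commute)
  then show ?thesis by (rule mult_right_le_imp_le) (simp add: False \<open>0 \<le> P\<close> order_less_le)
qed (use assms(2) in simp)

lemma weighted_Lr_norm_implicit_step:
  assumes "finite I" and h: "\<And>i. i \<in> I \<Longrightarrow> 0 \<le> h i"
    and Kk: "\<And>i j. i \<in> I \<Longrightarrow> j \<in> I \<Longrightarrow> 0 \<le> Kk i j"
    and sym: "\<And>i j. i \<in> I \<Longrightarrow> j \<in> I \<Longrightarrow> Kk i j = Kk j i"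
    and "1 \<le> r" and "0 \<le> \<tau>"
    and step: "\<And>i. i \<in> I \<Longrightarrow> v i + \<tau> * p_Laplacian I h Kk p v i = a i + \<tau> * b i"
  shows "(\<Sum>i\<in>I. h i * \<bar>v i\<bar> powr r) powr (1 / r)
    \<le> (\<Sum>i\<in>I. h i * \<bar>a i\<bar> powr r) powr (1 / r) + \<tau> * (\<Sum>i\<in>I. h i * \<bar>b i\<bar> powr r) powr (1 / r)"
proof -
  define P where "P = (\<Sum>i\<in>I. h i * \<bar>v i\<bar> powr r)"
  define A where "A = (\<Sum>i\<in>I. h i * \<bar>a i\<bar> powr r) powr (1 / r)"
  define B where "B = (\<Sum>i\<in>I. h i * \<bar>b i\<bar> powr r) powr (1 / r)"
  have Holder: "(\<Sum>i\<in>I. h i * \<bar>v i\<bar> powr (r - 1) * \<bar>c i\<bar>)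
      \<le> P powr ((r - 1) / r) * (\<Sum>i\<in>I. h i * \<bar>c i\<bar> powr r) powr (1 / r)" for c
    unfolding P_def using \<open>finite I\<close> h \<open>1 \<le> r\<close> by (intro sum_powr_Holder) auto
  have "P \<le> (\<Sum>i\<in>I. h i * \<bar>v i\<bar> powr (r - 1) * \<bar>a i + \<tau> * b i\<bar>)"
    unfolding P_def using sum_abs_powr_implicit_step[OF h Kk sym \<open>1 \<le> r\<close> \<open>0 \<le> \<tau>\<close> step] .
  also have "\<dots> \<le> (\<Sum>i\<in>I. h i * \<bar>v i\<bar> powr (r - 1) * \<bar>a i\<bar>)
      + \<tau> * (\<Sum>i\<in>I. h i * \<bar>v i\<bar> powr (r - 1) * \<bar>b i\<bar>)"
  proof -
    have "\<bar>a i + \<tau> * b i\<bar> \<le> \<bar>a i\<bar> + \<tau> * \<bar>b i\<bar>" for i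
      using abs_triangle_ineq[of "a i" "\<tau> * b i"] \<open>0 \<le> \<tau>\<close> by (simp add: abs_mult)
    then have "(\<Sum>i\<in>I. h i * \<bar>v i\<bar> powr (r - 1) * \<bar>a i + \<tau> * b i\<bar>)
        \<le> (\<Sum>i\<in>I. h i * \<bar>v i\<bar> powr (r - 1) * (\<bar>a i\<bar> + \<tau> * \<bar>b i\<bar>))"
      using h by (intro sum_mono mult_left_mono) auto
    then show ?thesis by (simp add: distrib_left sum.distrib sum_distrib_left mult_ac)
  qed
  also have "\<dots> \<le> P powr ((r - 1) / r) * A + \<tau> * (P powr ((r - 1) / r) * B)"
    unfolding A_def B_def using Holder \<open>0 \<le> \<tau>\<close> by (intro add_mono mult_left_mono) auto
  also have "\<dots> = P powr ((r - 1) / r) * (A + \<tau> * B)"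
    by algebra
  finally have "P \<le> P powr ((r - 1) / r) * (A + \<tau> * B)" .
  moreover have "0 \<le> P" unfolding P_def by (intro sum_nonneg mult_nonneg_nonneg h) auto
  ultimately have "P powr (1 / r) \<le> A + \<tau> * B"
    using \<open>1 \<le> r\<close> \<open>0 \<le> \<tau>\<close> by (intro powr_one_div_le_of_le_powr_mult) (auto simp: A_def B_def)
  then show ?thesis unfolding P_def A_def B_def .
qed

lemma Max_abs_implicit_step:
  assumes "finite I" and "I \<noteq> {}" and h: "\<And>i. i \<in> I \<Longrightarrow> 0 \<le> h i"
    and Kk: "\<And>i j. i \<in> I \<Longrightarrow> j \<in> I \<Longrightarrow> 0 \<le> Kk i j" and "0 \<le> \<tau>"
    and step: "\<And>i. i \<in> I \<Longrightarrow> v i + \<tau> * p_Laplacian I h Kk p v i = a i + \<tau> * b i"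
  shows "Max ((\<lambda>i. \<bar>v i\<bar>) ` I) \<le> Max ((\<lambda>i. \<bar>a i\<bar>) ` I) + \<tau> * Max ((\<lambda>i. \<bar>b i\<bar>) ` I)"
proof -
  have "Max ((\<lambda>i. \<bar>v i\<bar>) ` I) \<in> (\<lambda>i. \<bar>v i\<bar>) ` I"
    using assms(1,2) by (intro Max_in) auto
  then obtain i where i: "i \<in> I" and max_i: "Max ((\<lambda>i. \<bar>v i\<bar>) ` I) = \<bar>v i\<bar>" by auto
  have le_i: "\<bar>v j\<bar> \<le> \<bar>v i\<bar>" if "j \<in> I" for j
    using that \<open>finite I\<close> max_i by (metis Max_ge finite_imageI image_eqI)
  have "\<bar>v i\<bar> \<le> \<bar>a i + \<tau> * b i\<bar>"
  proof (cases "0 \<le> v i")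
    case True
    then have "0 \<le> p_Laplacian I h Kk p v i"
      using h Kk[OF i] le_i by (intro p_Laplacian_nonneg_at_max) (auto simp: abs_le_iff)
    then show ?thesis using step[OF i] True \<open>0 \<le> \<tau>\<close> by (smt (verit) mult_nonneg_nonneg)
  next
    case False
    then have "p_Laplacian I h Kk p v i \<le> 0"
      using h Kk[OF i] le_i by (intro p_Laplacian_nonpos_at_min) (auto simp: abs_le_iff)
    then show ?thesis using step[OF i] False \<open>0 \<le> \<tau>\<close> by (smt (verit) mult_nonneg_nonpos)
  qed
  also have "\<dots> \<le> \<bar>a i\<bar> + \<tau> * \<bar>b i\<bar>"
    using abs_triangle_ineq[of "a i" "\<tau> * b i"] \<open>0 \<le> \<tau>\<close> by (simp add: abs_mult)
  also have "\<dots> \<le> Max ((\<lambda>i. \<bar>a i\<bar>) ` I) + \<tau> * Max ((\<lambda>i. \<bar>b i\<bar>) ` I)"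
    using i \<open>finite I\<close> \<open>0 \<le> \<tau>\<close> by (intro add_mono mult_left_mono) auto
  finally show ?thesis using max_i by simp
qed

lemma le_initial_plus_sum_increments:
  fixes x d :: "nat \<Rightarrow> real"
  assumes step: "\<And>k. k < N \<Longrightarrow> x (Suc k) \<le> x k + d (Suc k)"
    and nonneg: "\<And>k. k < N \<Longrightarrow> 0 \<le> d (Suc k)" and "k \<le> N"
  shows "x k \<le> x 0 + (\<Sum>j=1..N. d j)"
proof -
  have "x k \<le> x 0 + (\<Sum>j=1..k. d j)"
    using \<open>k \<le> N\<close>
  proof (induction k)
    case (Suc k)
    then show ?case using step[of k] by simp
  qed simp
  also have "(\<Sum>j=1..k. d j) \<le> (\<Sum>j=1..N. d j)"
  proof (rule sum_mono2)
    fix j assume "j \<in> {1..N} - {1..k}"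
    then have "j - 1 < N" and "Suc (j - 1) = j" by auto
    then show "0 \<le> d j" using nonneg[of "j - 1"] by simp
  qed (use \<open>k \<le> N\<close> in auto)
  finally show ?thesis by simp
qed

locale time_grid =
  fixes tt :: "nat \<Rightarrow> real" and N :: nat and T :: real
  assumes grid_0: "tt 0 = 0" and grid_N: "tt N = T"
    and grid_increasing: "\<And>k. k < N \<Longrightarrow> tt k < tt (Suc k)"
begin

lemma grid_mono:
  assumes "j \<le> k" and "k \<le> N"
  shows "tt j \<le> tt k"
  using assms
proof (induction k rule: dec_induct)
  case (step k)
  then show ?case using grid_increasing[of k] by simp
qed simp

lemma Least_grid_eq_iff:
  assumes "t \<le> T" and "k \<le> N"
  shows "(LEAST j. t \<le> tt j) = k \<longleftrightarrow> t \<le> tt k \<and> (k = 0 \<or> tt (k - 1) < t)"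
proof
  assume L: "(LEAST j. t \<le> tt j) = k"
  have "t \<le> tt k" using LeastI[of "\<lambda>j. t \<le> tt j" N] \<open>t \<le> T\<close> grid_N L by simp
  moreover have "k = 0 \<or> tt (k - 1) < t"
    using not_less_Least[of "k - 1" "\<lambda>j. t \<le> tt j"] L by (cases k) auto
  ultimately show "t \<le> tt k \<and> (k = 0 \<or> tt (k - 1) < t)" ..
next
  assume R: "t \<le> tt k \<and> (k = 0 \<or> tt (k - 1) < t)"
  show "(LEAST j. t \<le> tt j) = k"
  proof (rule Least_equality)
    show "t \<le> tt k" using R by simp
    fix j assume "t \<le> tt j"
    show "k \<le> j"
    proof (rule ccontr)
      assume "\<not> k \<le> j"
      then have "tt j \<le> tt (k - 1)" using grid_mono[of j "k - 1"] \<open>k \<le> N\<close> by simp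
      then show False using R \<open>t \<le> tt j\<close> \<open>\<not> k \<le> j\<close> by auto
    qed
  qed
qed

lemma grid_bounds: "k \<le> N \<Longrightarrow> 0 \<le> tt k \<and> tt k \<le> T"
  using grid_mono[of 0 k] grid_mono[of k N] grid_0 grid_N by auto

lemma grid_level_set:
  assumes "k \<le> N"
  shows "{t \<in> {0..T}. (LEAST j. t \<le> tt j) = k} = (if k = 0 then {0} else {tt (k - 1)<..tt k})"
proof (cases "k = 0")
  case True
  then show ?thesis using Least_grid_eq_iff[of _ 0] grid_bounds[of N] grid_0 by auto
next
  case False
  have "0 \<le> tt (k - 1)" "tt k \<le> T" using grid_bounds \<open>k \<le> N\<close> by auto
  have "t \<in> {0..T} \<and> (LEAST j. t \<le> tt j) = k \<longleftrightarrow> t \<in> {tt (k - 1)<..tt k}" for t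
  proof
    assume "t \<in> {0..T} \<and> (LEAST j. t \<le> tt j) = k"
    then show "t \<in> {tt (k - 1)<..tt k}" using Least_grid_eq_iff[of t k] \<open>k \<le> N\<close> False by simp
  next
    assume t: "t \<in> {tt (k - 1)<..tt k}"
    then have "t \<in> {0..T}" using \<open>0 \<le> tt (k - 1)\<close> \<open>tt k \<le> T\<close> by auto
    moreover have "(LEAST j. t \<le> tt j) = k"
      using Least_grid_eq_iff[of t k] t \<open>k \<le> N\<close> \<open>t \<in> {0..T}\<close> by simp
    ultimately show "t \<in> {0..T} \<and> (LEAST j. t \<le> tt j) = k" ..
  qed
  then show ?thesis using False by (intro set_eqI) simp
qed

lemma integral_time_interp:
  fixes c :: "nat \<Rightarrow> real"
  shows "(\<integral>t. time_interp tt c t \<partial>lebesgue_on {0..T}) = (\<Sum>k=1..N. (tt k - tt (k - 1)) * c k)"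
proof -
  let ?M = "lebesgue_on {0..T}"
  define A where "A k = {t \<in> {0..T}. (LEAST j. t \<le> tt j) = k}" for k
  have A_k: "A k = (if k = 0 then {0} else {tt (k - 1)<..tt k})" if "k \<in> {0..N}" for k
    using grid_level_set[of k] that unfolding A_def by simp
  have A_sub: "A k \<subseteq> {0..T}" for k by (auto simp: A_def)
  have sets_A: "A k \<in> sets ?M" and finite_A: "emeasure ?M (A k) < \<infinity>"
    and measure_A: "measure ?M (A k) = (if k = 0 then 0 else tt k - tt (k - 1))" if "k \<in> {0..N}" for k
    using A_sub[of k] A_k[OF that] grid_mono[of "k - 1" k] that
    by (simp_all add: sets_restrict_space_iff emeasure_restrict_space measure_restrict_space)
  have "time_interp tt c t = (\<Sum>k\<in>{0..N}. c k * indicator (A k) t)" if "t \<in> {0..T}" for t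
  proof -
    have "(LEAST j. t \<le> tt j) \<le> N" using that grid_N by (intro Least_le) simp
    moreover have "(\<Sum>k\<in>{0..N}. c k * indicator (A k) t)
        = (\<Sum>k\<in>{0..N}. if k = (LEAST j. t \<le> tt j) then c k else 0)"
      using that by (intro sum.cong) (auto simp: A_def)
    ultimately show ?thesis by (simp add: time_interp_def)
  qed
  then have "(\<integral>t. time_interp tt c t \<partial>?M) = (\<integral>t. (\<Sum>k\<in>{0..N}. c k * indicator (A k) t) \<partial>?M)"
    by (intro Bochner_Integration.integral_cong) auto
  also have "\<dots> = (\<Sum>k\<in>{0..N}. c k * measure ?M (A k))"
    using sets_A finite_A by (intro integral_indicator_sum) auto
  also have "\<dots> = (\<Sum>k=1..N. (tt k - tt (k - 1)) * c k)"
    using measure_A by (simp add: sum.atLeast_Suc_atMost mult.commute)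
  finally show ?thesis .
qed

end

definition discrete_Lp_norm ::
    "(nat \<Rightarrow> 'c set) \<Rightarrow> (nat \<Rightarrow> 'c \<Rightarrow> (real^'d) set) \<Rightarrow> nat \<Rightarrow> ereal \<Rightarrow> ('c \<Rightarrow> real) \<Rightarrow> real" where
  "discrete_Lp_norm J cell n q v = (if q = \<infinity> then Max ((\<lambda>i. \<bar>v i\<bar>) ` J n)
     else (\<Sum>i\<in>J n. hmeas cell n i * \<bar>v i\<bar> powr real_of_ereal q) powr (1 / real_of_ereal q))"

locale cell_partitioned =
  fixes J :: "nat \<Rightarrow> 'c set" and cell :: "nat \<Rightarrow> 'c \<Rightarrow> (real^'d) set"
  assumes cell_partition: "cell_partition J cell"
begin

lemma finite_cells: "finite (J n)"
  and hypercubic_cell: "i \<in> J n \<Longrightarrow> hypercubic (cell n i)"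
  and cells_cover: "(\<Union>i\<in>J n. cell n i) = Omega"
  using cell_partition unfolding cell_partition_def by simp_all

lemma cells_disjoint: "i \<in> J n \<Longrightarrow> j \<in> J n \<Longrightarrow> x \<in> cell n i \<Longrightarrow> x \<in> cell n j \<Longrightarrow> i = j"
  using cell_partition unfolding cell_partition_def disjoint_iff by metis

lemma cell_subset_Omega: "i \<in> J n \<Longrightarrow> cell n i \<subseteq> Omega"
  using cells_cover by blast

lemma cells_nonempty: "J n \<noteq> {}"
proof
  assume "J n = {}"
  moreover have "0 \<in> Omega" unfolding Omega_def by (simp add: mem_box)
  ultimately show False using cells_cover[of n] by auto
qed

lemma hmeas_pos: "i \<in> J n \<Longrightarrow> 0 < hmeas cell n i"
  unfolding hmeas_def using hypercubic_cell by (rule hypercubic_lmeasurable_pos)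

lemma cell_nonempty: "i \<in> J n \<Longrightarrow> cell n i \<noteq> {}"
  using hmeas_pos[of i n] unfolding hmeas_def by auto

lemma cell_lmeasurable: "i \<in> J n \<Longrightarrow> cell n i \<in> lmeasurable"
  using hypercubic_cell by (rule hypercubic_lmeasurable_pos)

lemma sets_cell: "i \<in> J n \<Longrightarrow> cell n i \<in> sets (lebesgue_on Omega)"
  using cell_lmeasurable cell_subset_Omega
  by (simp add: Omega_def sets_restrict_space_iff fmeasurable_def)

lemma emeasure_cell: "i \<in> J n \<Longrightarrow> emeasure (lebesgue_on Omega) (cell n i) = ennreal (hmeas cell n i)"
  using cell_lmeasurable cell_subset_Omega
  by (simp add: Omega_def emeasure_restrict_space hmeas_def emeasure_eq_measure2)

lemma measure_cell: "i \<in> J n \<Longrightarrow> measure (lebesgue_on Omega) (cell n i) = hmeas cell n i"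
  using cell_lmeasurable cell_subset_Omega
  by (simp add: Omega_def measure_restrict_space hmeas_def)

lemma In_eq_sum: "In J cell n v = (\<lambda>x. \<Sum>i\<in>J n. v i * indicator (cell n i) x)"
  by (simp add: In_def fun_eq_iff)

lemma In_cell: "i \<in> J n \<Longrightarrow> x \<in> cell n i \<Longrightarrow> In J cell n v x = v i"
proof -
  assume i: "i \<in> J n" and x: "x \<in> cell n i"
  then have "In J cell n v x = (\<Sum>j\<in>J n. if j = i then v i else 0)"
    unfolding In_def using cells_disjoint by (intro sum.cong) (auto simp: indicator_def)
  then show ?thesis using i finite_cells by simp
qed

lemma In_outside: "x \<notin> Omega \<Longrightarrow> In J cell n v x = 0"
  unfolding In_def using cells_cover by (intro sum.neutral) (auto simp: indicator_def)

lemma In_cases: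
  obtains i where "i \<in> J n" and "x \<in> cell n i" and "\<And>v. In J cell n v x = v i"
  | "\<And>v. In J cell n v x = 0"
  using In_cell In_outside cells_cover by (cases "x \<in> Omega") blast+

lemma In_comp: "F 0 = 0 \<Longrightarrow> F (In J cell n v x) = In J cell n (\<lambda>i. F (v i)) x"
  by (cases rule: In_cases[of n x]) auto

lemma In2_cells:
  assumes "i \<in> J n" "j \<in> J n" "x \<in> cell n i" "y \<in> cell n j"
  shows "In2 J cell n Kk x y = Kk i j"
proof -
  have "In2 J cell n Kk x y = In J cell n (\<lambda>i'. In J cell n (Kk i') y) x"
    unfolding In2_def In_def by (simp add: sum_distrib_left mult_ac)
  then show ?thesis using assms by (simp add: In_cell)
qed

lemma kernel_nonneg:
  assumes "\<And>x y. 0 \<le> In2 J cell n Kk x y" "i \<in> J n" "j \<in> J n"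
  shows "0 \<le> Kk i j"
proof -
  obtain x y where "x \<in> cell n i" "y \<in> cell n j" using assms(2,3) cell_nonempty by blast
  then show ?thesis using assms(1)[of x y] In2_cells[OF assms(2,3)] In2_cells[OF assms(3,2)] by simp
qed

lemma kernel_sym:
  assumes "\<And>x y. In2 J cell n Kk x y = In2 J cell n Kk y x" "i \<in> J n" "j \<in> J n"
  shows "Kk i j = Kk j i"
proof -
  obtain x y where "x \<in> cell n i" "y \<in> cell n j" using assms(2,3) cell_nonempty by blast
  then show ?thesis using assms(1)[of x y] In2_cells[OF assms(2,3)] In2_cells[OF assms(3,2)] by simp
qed

lemma In_measurable: "In J cell n v \<in> borel_measurable (lebesgue_on Omega)"
  unfolding In_eq_sum using sets_cell by (intro borel_measurable_sum borel_measurable_times) auto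

lemma integrable_In: "integrable (lebesgue_on Omega) (In J cell n v)"
  and integral_In: "integral\<^sup>L (lebesgue_on Omega) (In J cell n v) = (\<Sum>i\<in>J n. hmeas cell n i * v i)"
proof -
  have "i \<in> J n \<Longrightarrow> emeasure (lebesgue_on Omega) (cell n i) < \<infinity>" for i
    using emeasure_cell by simp
  note sum_cells = integral_indicator_sum[OF finite_cells sets_cell this, where c=v]
  show "integrable (lebesgue_on Omega) (In J cell n v)"
    unfolding In_eq_sum by (rule sum_cells(1))
  show "integral\<^sup>L (lebesgue_on Omega) (In J cell n v) = (\<Sum>i\<in>J n. hmeas cell n i * v i)"
    unfolding In_eq_sum using sum_cells(2) measure_cell by (simp add: mult.commute)
qed

lemma esssup_In:
  "esssup (lebesgue_on Omega) (\<lambda>x. ereal \<bar>In J cell n v x\<bar>) = ereal (Max ((\<lambda>i. \<bar>v i\<bar>) ` J n))"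
proof (rule antisym)
  let ?m = "Max ((\<lambda>i. \<bar>v i\<bar>) ` J n)"
  have le_max: "\<bar>v i\<bar> \<le> ?m" if "i \<in> J n" for i
    using that finite_cells by simp
  then have "0 \<le> ?m" using cells_nonempty by (meson abs_ge_zero all_not_in_conv order_trans)
  then have "ereal \<bar>In J cell n v x\<bar> \<le> ereal ?m" for x
    using le_max by (cases rule: In_cases[of n x]) auto
  then show "esssup (lebesgue_on Omega) (\<lambda>x. ereal \<bar>In J cell n v x\<bar>) \<le> ereal ?m"
    using In_measurable by (intro esssup_I) auto
  have "?m \<in> (\<lambda>i. \<bar>v i\<bar>) ` J n"
    using finite_cells cells_nonempty by (intro Max_in) auto
  then obtain i where i: "i \<in> J n" "\<bar>v i\<bar> = ?m" by auto
  show "ereal ?m \<le> esssup (lebesgue_on Omega) (\<lambda>x. ereal \<bar>In J cell n v x\<bar>)"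
    using i sets_cell[OF i(1)] emeasure_cell[OF i(1)] hmeas_pos[OF i(1)] In_cell[OF i(1)]
    by (intro esssup_ge_on_pos_measure[of "cell n i"]) auto
qed

lemma abs_powr_In: "(\<lambda>x. \<bar>In J cell n v x\<bar> powr r) = In J cell n (\<lambda>i. \<bar>v i\<bar> powr r)"
  by (rule ext, rule In_comp) simp

lemma Lp_mem_In: "Lp_mem r (In J cell n v)"
  unfolding Lp_mem_def abs_powr_In esssup_In using In_measurable integrable_In by simp

lemma Lp_norm_In: "Lp_norm q (In J cell n v) = discrete_Lp_norm J cell n q v"
  unfolding Lp_norm_def discrete_Lp_norm_def abs_powr_In esssup_In integral_In by simp

lemma discrete_Lp_norm_nonneg: "0 \<le> discrete_Lp_norm J cell n q v"
proof -
  obtain i where "i \<in> J n" using cells_nonempty by blast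
  then have "\<bar>v i\<bar> \<le> Max ((\<lambda>i. \<bar>v i\<bar>) ` J n)" using finite_cells by simp
  then show ?thesis unfolding discrete_Lp_norm_def by (simp add: order_trans[OF abs_ge_zero])
qed

lemma discrete_Lp_norm_cong:
  "(\<And>i. i \<in> J n \<Longrightarrow> v i = w i) \<Longrightarrow> discrete_Lp_norm J cell n q v = discrete_Lp_norm J cell n q w"
  unfolding discrete_Lp_norm_def by (simp cong: image_cong sum.cong)

lemma discrete_Lp_norm_implicit_step:
  assumes "1 \<le> q" and "0 \<le> \<tau>"
    and In2_nonneg: "\<And>x y. 0 \<le> In2 J cell n Kk x y"
    and In2_sym: "\<And>x y. In2 J cell n Kk x y = In2 J cell n Kk y x"
    and step: "\<And>i. i \<in> J n \<Longrightarrow> v i + \<tau> * p_Laplacian (J n) (hmeas cell n) Kk p v i = a i + \<tau> * b i"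
  shows "discrete_Lp_norm J cell n q v \<le> discrete_Lp_norm J cell n q a + \<tau> * discrete_Lp_norm J cell n q b"
proof -
  have h: "\<And>i. i \<in> J n \<Longrightarrow> 0 \<le> hmeas cell n i" using hmeas_pos less_imp_le by blast
  have Kk: "\<And>i j. i \<in> J n \<Longrightarrow> j \<in> J n \<Longrightarrow> 0 \<le> Kk i j"
    using kernel_nonneg[OF In2_nonneg] .
  have sym: "\<And>i j. i \<in> J n \<Longrightarrow> j \<in> J n \<Longrightarrow> Kk i j = Kk j i"
    using kernel_sym[OF In2_sym] .
  show ?thesis
  proof (cases "q = \<infinity>")
    case True
    then show ?thesis
      using Max_abs_implicit_step[where I="J n" and h="hmeas cell n" and Kk=Kk,
          OF finite_cells cells_nonempty h Kk \<open>0 \<le> \<tau>\<close> step]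
      unfolding discrete_Lp_norm_def by simp
  next
    case False
    then obtain r where "q = ereal r" "1 \<le> r" using \<open>1 \<le> q\<close> by (cases q) auto
    then show ?thesis
      using weighted_Lr_norm_implicit_step[where I="J n" and h="hmeas cell n" and Kk=Kk,
          OF finite_cells h Kk sym \<open>1 \<le> r\<close> \<open>0 \<le> \<tau>\<close> step]
      unfolding discrete_Lp_norm_def by simp
  qed
qed

lemma discrete_Lp_norm_scheme_bound:
  assumes increasing: "\<And>k. k < N \<Longrightarrow> tt k < tt (Suc k)" and "1 \<le> q"
    and In2_nonneg: "\<And>x y. 0 \<le> In2 J cell n Kk x y"
    and In2_sym: "\<And>x y. In2 J cell n Kk x y = In2 J cell n Kk y x"
    and scheme: "\<And>k i. k \<in> {1..N} \<Longrightarrow> i \<in> J n \<Longrightarrow>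
        (u k i - u (k - 1) i) / (tt k - tt (k - 1))
          = (\<Sum>j\<in>J n. hmeas cell n j * Kk i j * Psi p (u k j - u k i)) + f k i"
    and "k \<le> N"
  shows "discrete_Lp_norm J cell n q (u k)
    \<le> discrete_Lp_norm J cell n q (u 0) + (\<Sum>j=1..N. (tt j - tt (j - 1)) * discrete_Lp_norm J cell n q (f j))"
proof -
  let ?norm = "discrete_Lp_norm J cell n q"
  have step: "?norm (u (Suc k)) \<le> ?norm (u k) + (tt (Suc k) - tt k) * ?norm (f (Suc k))"
    if "k < N" for k
  proof -
    define \<tau> where "\<tau> = tt (Suc k) - tt k"
    have "0 < \<tau>" using increasing[OF that] by (simp add: \<tau>_def)
    have "u (Suc k) i + \<tau> * p_Laplacian (J n) (hmeas cell n) Kk p (u (Suc k)) i = u k i + \<tau> * f (Suc k) i"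
      if "i \<in> J n" for i
    proof -
      have "(u (Suc k) i - u k i) / \<tau>
          = (\<Sum>j\<in>J n. hmeas cell n j * Kk i j * Psi p (u (Suc k) j - u (Suc k) i)) + f (Suc k) i"
        using scheme[of "Suc k" i] that \<open>k < N\<close> by (simp add: \<tau>_def)
      then show ?thesis using \<open>0 < \<tau>\<close> by (simp add: p_Laplacian_def divide_eq_eq algebra_simps)
    qed
    then show ?thesis unfolding \<tau>_def[symmetric]
      by (rule discrete_Lp_norm_implicit_step[OF \<open>1 \<le> q\<close> less_imp_le[OF \<open>0 < \<tau>\<close>] In2_nonneg In2_sym])
  qed
  have "0 \<le> (tt (Suc j) - tt j) * ?norm (f (Suc j))" if "j < N" for j
    using increasing[OF that] discrete_Lp_norm_nonneg by simp
  then show ?thesis using step \<open>k \<le> N\<close> by (intro le_initial_plus_sum_increments) auto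
qed

end

theorem lemma6p13:
  fixes p :: real and q :: ereal and T :: real and N :: nat and tt :: "nat \<Rightarrow> real"
    and J :: "nat \<Rightarrow> 'c set" and cell :: "nat \<Rightarrow> 'c \<Rightarrow> (real^'d) set"
    and K :: "nat \<Rightarrow> 'c \<Rightarrow> 'c \<Rightarrow> real" and g :: "nat \<Rightarrow> 'c \<Rightarrow> real"
    and f :: "nat \<Rightarrow> nat \<Rightarrow> 'c \<Rightarrow> real" and u :: "nat \<Rightarrow> nat \<Rightarrow> 'c \<Rightarrow> real"
  assumes p: "1 < p"
    and q: "1 \<le> q"
    and part: "cell_partition J cell"
    and time0: "tt 0 = 0" and timeN: "tt N = T"
    and timemono: "\<And>k. k < N \<Longrightarrow> tt k < tt (Suc k)"
    and scheme: "\<And>n k i. k \<in> {1..N} \<Longrightarrow> i \<in> J n \<Longrightarrow>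
        (u n k i - u n (k - 1) i) / (tt k - tt (k - 1))
          = (\<Sum>j\<in>J n. hmeas cell n j * K n i j * Psi p (u n k j - u n k i)) + f n k i"
    and init: "\<And>n i. i \<in> J n \<Longrightarrow> u n 0 i = g n i"
    and K_nonneg: "\<And>n x y. In2 J cell n (K n) x y \<ge> 0"
    and K_meas: "\<And>n. (\<lambda>z. In2 J cell n (K n) (fst z) (snd z)) \<in> borel_measurable borel"
    and K_sym: "\<And>n x y. In2 J cell n (K n) x y = In2 J cell n (K n) y x"
    and K_bdd: "\<And>n. \<exists>C::real. \<forall>x\<in>Omega.
        (\<integral>\<^sup>+ y. ennreal (In2 J cell n (K n) x y) \<partial>lebesgue_on Omega) \<le> ennreal C"
    and g_mem: "\<And>n. Lp_mem (max (ereal p) q) (In J cell n (g n))"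
    and g_bdd: "\<exists>C. \<forall>n. Lp_norm q (In J cell n (g n)) \<le> C"
    and f_mem: "\<And>n. L1Lp_mem T (max (ereal p) q)
        (\<lambda>x t. In J cell n (time_interp tt (f n) t) x)"
    and f_bdd: "\<exists>C. \<forall>n. L1Lp_norm T q (\<lambda>x t. In J cell n (time_interp tt (f n) t) x) \<le> C"
  shows "(\<forall>n. \<forall>t\<in>{0..T}. Lp_mem (max (ereal p) q) (\<lambda>x. In J cell n (time_interp tt (u n) t) x))
       \<and> (\<exists>C. \<forall>n. \<forall>t\<in>{0..T}. Lp_norm q (\<lambda>x. In J cell n (time_interp tt (u n) t) x) \<le> C)"
proof -
  interpret cell_partitioned J cell by (rule cell_partitioned.intro) (rule part)
  interpret time_grid tt N T by (rule time_grid.intro) (fact time0 timeN timemono)+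
  let ?norm = "\<lambda>n v. discrete_Lp_norm J cell n q v"
  obtain Cg where Cg: "\<And>n. ?norm n (g n) \<le> Cg"
    using g_bdd Lp_norm_In by metis
  have "L1Lp_norm T q (\<lambda>x t. In J cell n (time_interp tt (f n) t) x)
      = (\<Sum>k=1..N. (tt k - tt (k - 1)) * ?norm n (f n k))" for n
    unfolding L1Lp_norm_def Lp_norm_In
    using integral_time_interp[of "\<lambda>k. ?norm n (f n k)"] by (simp add: time_interp_def)
  then obtain Cf where Cf: "\<And>n. (\<Sum>k=1..N. (tt k - tt (k - 1)) * ?norm n (f n k)) \<le> Cf"
    using f_bdd by metis
  have "Lp_norm q (\<lambda>x. In J cell n (time_interp tt (u n) t) x) \<le> Cg + Cf" if "t \<in> {0..T}" for n t
  proof -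
    define k where "k = (LEAST k. t \<le> tt k)"
    have "k \<le> N" unfolding k_def using that timeN by (intro Least_le) simp
    have "Lp_norm q (\<lambda>x. In J cell n (time_interp tt (u n) t) x) = ?norm n (u n k)"
      by (simp add: Lp_norm_In time_interp_def k_def)
    also have "\<dots> \<le> ?norm n (u n 0) + (\<Sum>j=1..N. (tt j - tt (j - 1)) * ?norm n (f n j))"
      by (rule discrete_Lp_norm_scheme_bound[where u="u n" and f="f n" and Kk="K n",
            OF timemono q K_nonneg K_sym scheme \<open>k \<le> N\<close>])
    also have "?norm n (u n 0) = ?norm n (g n)" using init by (rule discrete_Lp_norm_cong)
    finally show ?thesis using Cg[of n] Cf[of n] by simp
  qed
  then show ?thesis using Lp_mem_In by blast
qed

end
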